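(* Let $\boldsymbol{x}\in\mathbb{R}^n$, $\theta\in\mathbb{R}$, $\alpha>0$, and let $\boldsymbol{s}(t,\boldsymbol{x})=\boldsymbol{x}\sum_jc(t-\tau_j)$ be a stimulus (see context). Consider $$\dot{\boldsymbol{w}}=\alpha\,v(\boldsymbol{s}(t,\boldsymbol{x}),\boldsymbol{w},\theta)\,y(\boldsymbol{s}(t,\boldsymbol{x}),\boldsymbol{w})\big(\boldsymbol{s}(t,\boldsymbol{x})-\boldsymbol{w}\,y(\boldsymbol{s}(t,\boldsymbol{x}),\boldsymbol{w})\big),\qquad\boldsymbol{w}(t_0)=\boldsymbol{w}_0\in\mathbb{R}^n,\ \boldsymbol{w}_0\ne0.$$ Then: 1) the solution $\boldsymbol{w}(\cdot,\boldsymbol{w}_0)$ is defined for all $t\ge t_0$, is unique, and is bounded in forward time. 2) If in addition $\theta\ge0$ and there exist $L,\delta>0$ such that $$\int_t^{t+L}v(\boldsymbol{s}(\tau,\boldsymbol{x}),\boldsymbol{w}(\tau,\boldsymbol{w}_0),\theta)\,\langle\boldsymbol{s}(\tau,\boldsymbol{x}),\boldsymbol{w}(\tau,\boldsymbol{w}_0)\rangle^2\,d\tau>\delta\quad\forall t\ge t_0,$$ then $\lim_{t\to\infty}\boldsymbol{w}(t,\boldsymbol{w}_0)=\boldsymbol{x}/\|\boldsymbol{x}\|$.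
   Context: Notation: $\langle\cdot,\cdot\rangle$ and $\|\cdot\|$ are the Euclidean inner product and norm on $\mathbb{R}^n$. Stimulus: fix $\Delta T>0$ and $c(t)=1$ for $t\in[0,\Delta T]$, $c(t)=0$ otherwise; $\boldsymbol{s}(t,\boldsymbol{x})=\boldsymbol{x}\sum_jc(t-\tau_j)$ with presentation times satisfying $\tau_{j+1}>\tau_j+\Delta T$. Neuron: $y(\boldsymbol{s},\boldsymbol{w})=\langle\boldsymbol{w},\boldsymbol{s}\rangle$, $v(\boldsymbol{s},\boldsymbol{w},\theta)=f(y(\boldsymbol{s},\boldsymbol{w})-\theta)$ with $f:\mathbb{R}\to\mathbb{R}$ continuous, locally Lipschitz, $f(u)=0$ for $u\le0$, $f(u)>0$ for $u>0$. *)

theory Defs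
  imports "HOL-Analysis.Analysis"
begin

definition cpulse :: "real \<Rightarrow> real \<Rightarrow> real" where
  "cpulse DT t = (if 0 \<le> t \<and> t \<le> DT then 1 else 0)"

definition stim :: "real \<Rightarrow> (nat \<Rightarrow> real) \<Rightarrow> 'a::real_vector \<Rightarrow> real \<Rightarrow> 'a" where
  "stim DT tau x t = (\<Sum>j. cpulse DT (t - tau j)) *\<^sub>R x"

definition yout :: "'a::real_inner \<Rightarrow> 'a \<Rightarrow> real" where
  "yout s w = inner w s"

definition vout :: "(real \<Rightarrow> real) \<Rightarrow> 'a::real_inner \<Rightarrow> 'a \<Rightarrow> real \<Rightarrow> real" where
  "vout f s w theta = f (yout s w - theta)"

definition rhs :: "real \<Rightarrow> (real \<Rightarrow> real) \<Rightarrow> real \<Rightarrow> real \<Rightarrow> (nat \<Rightarrow> real) \<Rightarrow> 'a::real_inner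
                    \<Rightarrow> real \<Rightarrow> 'a \<Rightarrow> 'a" where
  "rhs alpha f theta DT tau x t w =
     (let s = stim DT tau x t
      in (alpha * vout f s w theta * yout s w) *\<^sub>R (s - yout s w *\<^sub>R w))"

text \<open>Caratheodory solution on a set T of times (T contained in [t0,..)):
  w is continuous on T, w t0 = w0, and w t = w0 + integral over [t0,t] of F(tau, w tau).\<close>
definition solves_on :: "(real \<Rightarrow> 'a::euclidean_space \<Rightarrow> 'a) \<Rightarrow> real \<Rightarrow> 'a \<Rightarrow> real set
                          \<Rightarrow> (real \<Rightarrow> 'a) \<Rightarrow> bool" where
  "solves_on F t0 w0 T w \<longleftrightarrow>
     w t0 = w0 \<and> continuous_on T w \<and>
     (\<forall>t\<in>T. ((\<lambda>\<tau>. F \<tau> (w \<tau>)) has_integral (w t - w0)) {t0..t})"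

end

(*
  The stimulus is x times a 0/1 pulse train, so a solution is the autonomous flow of
  F w = alpha f(<w,x> - theta) <w,x> (x - <w,x> w) run with the clock N t = integral of the pulses.
  With q w = f(<w,x> - theta) <w,x>^2 >= 0 one has <w, F w> = - alpha q w (|w|^2 - 1), so
  (|w|^2 - 1)^2 never grows and the flow exists globally; uniqueness is Gronwall, F being
  locally Lipschitz. Along a solution |w|^2 - 1 and the component of w orthogonal to x satisfy
  linear equations with rates 2 alpha q and alpha q, hence equal their initial values times
  exp (- c * integral of q). The excitation condition makes that integral diverge, so |w| -> 1 and
  w becomes parallel to x; then <w,x> is eventually nonzero, and it is positive at some late time
  because q > 0 there forces <w,x> > theta >= 0, so w -> x / |x|.
*)

theory Submission
  imports Defs
begin

section \<open>Integrals and ordinary differential equations\<close>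

lemma integrable_if_bounded_isCont_off_finite:
  fixes h :: "real \<Rightarrow> 'a::euclidean_space"
  assumes "finite S"
    and cont: "\<And>t. t \<in> {a..b} - S \<Longrightarrow> isCont h t"
    and bnd: "\<And>t. t \<in> {a..b} \<Longrightarrow> norm (h t) \<le> M"
  shows "h integrable_on {a..b}"
proof -
  have neg: "negligible S" using assms(1) by (simp add: negligible_finite)
  have L: "{a..b} - S \<in> sets lebesgue"
    using negligible_imp_sets[OF neg] by (intro sets.Diff) simp_all
  have "h \<in> borel_measurable (lebesgue_on ({a..b} - S))"
    using cont by (intro continuous_imp_measurable_on_sets_lebesgue[OF _ L])
      (simp add: continuous_at_imp_continuous_on)
  moreover have "(\<lambda>_. M) integrable_on ({a..b} - S)"
    by (rule integrable_spike_set[OF integrable_const_ivl]) (rule negligible_subset[OF neg], blast)+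
  ultimately have "h integrable_on ({a..b} - S)"
    using bnd by (rule measurable_bounded_by_integrable_imp_integrable[OF _ _ _ L]) auto
  then show ?thesis
    by (rule integrable_spike_set) (rule negligible_subset[OF neg], blast)+
qed

lemma DERIV_within_nonpos_imp_le:
  fixes h :: "real \<Rightarrow> real"
  assumes "a \<le> b"
    and "\<And>t. t \<in> {a..b} \<Longrightarrow> (h has_real_derivative h' t) (at t within {a..b})"
    and "\<And>t. t \<in> {a..b} \<Longrightarrow> h' t \<le> 0"
  shows "h b \<le> h a"
proof -
  have "(h' has_integral (h b - h a)) {a..b}"
    using assms(2) by (intro fundamental_theorem_of_calculus[OF assms(1)])
      (simp add: has_real_derivative_iff_has_vector_derivative)
  moreover have "((\<lambda>_. 0::real) has_integral 0) {a..b}" by simp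
  ultimately have "h b - h a \<le> 0" using assms(3) by (rule has_integral_le)
  then show ?thesis by simp
qed

lemma gronwall_zero:
  fixes e :: "real \<Rightarrow> real"
  assumes "a \<le> b" and ec: "continuous_on {a..b} e" and e0: "\<And>t. t \<in> {a..b} \<Longrightarrow> 0 \<le> e t"
    and K: "K \<ge> 0" and le: "\<And>t. t \<in> {a..b} \<Longrightarrow> e t \<le> K * integral {a..t} e"
    and t: "t \<in> {a..b}"
  shows "e t = 0"
proof -
  define g where "g s = integral {a..s} e" for s
  have gd: "(g has_real_derivative e s) (at s within {a..t})" if "s \<in> {a..t}" for s
  proof -
    have "(g has_vector_derivative e s) (at s within {a..b})"
      unfolding g_def using integral_has_vector_derivative[OF ec] that t by auto
    then show ?thesis
      using has_vector_derivative_within_subset t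
      by (fastforce simp: has_real_derivative_iff_has_vector_derivative)
  qed
  \<comment> \<open>the integrating factor: \<open>exp (- K s) * g s\<close> is nonincreasing\<close>
  have "exp (- K * t) * g t \<le> exp (- K * a) * g a"
  proof (rule DERIV_within_nonpos_imp_le[where h = "\<lambda>s. exp (- K * s) * g s"])
    show "a \<le> t" using t by simp
    fix s assume s: "s \<in> {a..t}"
    show "((\<lambda>s. exp (- K * s) * g s) has_real_derivative
        exp (- K * s) * (e s - K * g s)) (at s within {a..t})"
      by (rule derivative_eq_intros gd[OF s] refl)+ (simp add: algebra_simps)
    have "e s - K * g s \<le> 0" using le[of s] s t by (auto simp: g_def)
    then show "exp (- K * s) * (e s - K * g s) \<le> 0" by (simp add: mult_nonneg_nonpos)
  qed
  then have "exp (- K * t) * g t \<le> 0" by (simp add: g_def)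
  then have "g t \<le> 0" by (simp add: mult_le_0_iff)
  moreover have "g t \<ge> 0" unfolding g_def
    using e0 t by (intro integral_nonneg integrable_continuous_real continuous_on_subset[OF ec]) auto
  ultimately show "e t = 0" using le[OF t] e0[OF t] by (simp add: g_def)
qed

lemma exp_integrating_factor:
  fixes X :: "real \<Rightarrow> 'b::banach"
  assumes "a \<le> b" "finite S" and Xc: "continuous_on {a..b} X" and Qc: "continuous_on {a..b} Q"
    and Q0: "Q a = 0"
    and Qd: "\<And>t. t \<in> {a<..<b} - S \<Longrightarrow> (Q has_real_derivative k t) (at t)"
    and Xd: "\<And>t. t \<in> {a<..<b} - S \<Longrightarrow> (X has_vector_derivative (- (c * k t)) *\<^sub>R X t) (at t)"
  shows "X b = exp (- (c * Q b)) *\<^sub>R X a"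
proof -
  define H where "H t = exp (c * Q t) *\<^sub>R X t" for t
  have "((\<lambda>_. 0) has_integral (H b - H a)) {a..b}"
  proof (rule fundamental_theorem_of_calculus_interior_strong[OF assms(2) assms(1)])
    fix t assume t: "t \<in> {a<..<b} - S"
    have "(H has_vector_derivative (exp (c * Q t) * (c * k t)) *\<^sub>R X t
        + exp (c * Q t) *\<^sub>R ((- (c * k t)) *\<^sub>R X t)) (at t)"
      unfolding H_def using Qd[OF t] Xd[OF t]
      by (auto intro!: derivative_eq_intros
          simp: has_real_derivative_iff_has_vector_derivative[symmetric])
    then show "(H has_vector_derivative 0) (at t)"
      by (simp add: algebra_simps)
  qed (unfold H_def, intro continuous_intros Xc Qc)
  then have "exp (c * Q b) *\<^sub>R X b = X a"
    by (metis H_def Q0 exp_zero mult_zero_right scaleR_one has_integral_0 has_integral_unique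
        eq_iff_diff_eq_0)
  then show ?thesis by (metis exp_minus_inverse scaleR_scaleR scaleR_one)
qed

lemma has_vector_derivative_inner:
  fixes u v :: "real \<Rightarrow> 'a::real_inner"
  assumes "(u has_vector_derivative u') (at t within S)" "(v has_vector_derivative v') (at t within S)"
  shows "((\<lambda>s. inner (u s) (v s)) has_real_derivative inner (u t) v' + inner u' (v t)) (at t within S)"
  using has_derivative_inner[OF assms[unfolded has_vector_derivative_def]]
  unfolding has_field_derivative_def
  by (rule has_derivative_eq_rhs) (auto simp: fun_eq_iff algebra_simps)

lemma lipschitz_on_scaleR:
  fixes g :: "'a::metric_space \<Rightarrow> real" and h :: "'a \<Rightarrow> 'b::real_normed_vector"
  assumes g: "K1-lipschitz_on A g" and h: "K2-lipschitz_on A h"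
    and "bounded (g ` A)" "bounded (h ` A)"
  obtains K where "K-lipschitz_on A (\<lambda>u. g u *\<^sub>R h u)"
proof -
  obtain M1 where M1: "M1 > 0" "\<And>u. u \<in> A \<Longrightarrow> \<bar>g u\<bar> \<le> M1"
    using assms(3) by (auto simp: bounded_pos)
  obtain M2 where M2: "M2 > 0" "\<And>u. u \<in> A \<Longrightarrow> norm (h u) \<le> M2"
    using assms(4) by (auto simp: bounded_pos)
  have "(K1 * M2 + M1 * K2)-lipschitz_on A (\<lambda>u. g u *\<^sub>R h u)"
  proof (rule lipschitz_onI)
    fix a b assume ab: "a \<in> A" "b \<in> A"
    have "g a *\<^sub>R h a - g b *\<^sub>R h b = (g a - g b) *\<^sub>R h a + g b *\<^sub>R (h a - h b)"
      by (simp add: algebra_simps)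
    then have "dist (g a *\<^sub>R h a) (g b *\<^sub>R h b) \<le> \<bar>g a - g b\<bar> * norm (h a) + \<bar>g b\<bar> * norm (h a - h b)"
      by (metis dist_norm norm_scaleR norm_triangle_ineq)
    also have "\<bar>g a - g b\<bar> * norm (h a) \<le> (K1 * dist a b) * M2"
      using lipschitz_onD[OF g ab] M2(2)[OF ab(1)] by (intro mult_mono) (auto simp: dist_real_def)
    also have "\<bar>g b\<bar> * norm (h a - h b) \<le> M1 * (K2 * dist a b)"
      using lipschitz_onD[OF h ab] M1(2)[OF ab(2)] by (intro mult_mono) (auto simp: dist_norm)
    finally show "dist (g a *\<^sub>R h a) (g b *\<^sub>R h b) \<le> (K1 * M2 + M1 * K2) * dist a b"
      by (simp add: algebra_simps)
  qed (use lipschitz_on_nonneg[OF g] lipschitz_on_nonneg[OF h] M1 M2 in simp)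
  then show ?thesis by (rule that)
qed

lemma lipschitz_on_compact_if_locally:
  fixes f :: "'a::metric_space \<Rightarrow> 'b::metric_space"
  assumes "\<And>u. \<exists>e>0. \<exists>K. K-lipschitz_on (cball u e) f" and "compact X"
  obtains K where "K-lipschitz_on X f"
proof -
  have "local_lipschitz {0::real} X (\<lambda>_. f)"
  proof (rule local_lipschitzI)
    fix t x assume "t \<in> {0::real}" "x \<in> X"
    obtain e K where "e > 0" "K-lipschitz_on (cball x e) f" using assms(1) by blast
    then show "\<exists>u>0. \<exists>L. \<forall>t\<in>cball t u \<inter> {0}. L-lipschitz_on (cball x u \<inter> X) f"
      by (intro exI[of _ e] conjI exI[of _ K]) (auto intro: lipschitz_on_subset)
  qed
  from local_lipschitz_compact_implies_lipschitz[OF this assms(2) compact_sing] that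
  show ?thesis by auto
qed

definition clamp :: "real \<Rightarrow> real \<Rightarrow> real" where
  "clamp S t = max 0 (min S t)"

definition picard_step :: "('a::euclidean_space \<Rightarrow> 'a) \<Rightarrow> 'a \<Rightarrow> real \<Rightarrow> (real \<Rightarrow>\<^sub>C 'a) \<Rightarrow> real \<Rightarrow>\<^sub>C 'a"
  where "picard_step G p S v = Bcontfun (\<lambda>t. p + integral {0..clamp S t} (\<lambda>s. G (apply_bcontfun v s)))"

lemma clamp_in: "S \<ge> 0 \<Longrightarrow> clamp S t \<in> {0..S}"
  and clamp_id: "t \<in> {0..S} \<Longrightarrow> clamp S t = t"
  by (auto simp: clamp_def)

lemma apply_picard_step:
  assumes G: "continuous_on UNIV G" and S: "S \<ge> 0"
  shows "apply_bcontfun (picard_step G p S v) t = p + integral {0..clamp S t} (\<lambda>s. G (apply_bcontfun v s))"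
proof -
  define I where "I r = p + integral {0..r} (\<lambda>s. G (apply_bcontfun v s))" for r
  have "continuous_on A (\<lambda>s. G (apply_bcontfun v s))" for A
    by (rule continuous_on_compose2[OF G]) auto
  then have Ic: "continuous_on {0..S} I" unfolding I_def
    by (intro continuous_intros indefinite_integral_continuous_1 integrable_continuous_real)
  have "continuous_on UNIV (\<lambda>t. I (clamp S t))"
    by (rule continuous_on_compose2[OF Ic]) (use clamp_in[OF S] in \<open>auto simp: clamp_def intro!: continuous_intros\<close>)
  moreover have "bounded (range (\<lambda>t. I (clamp S t)))"
  proof (rule bounded_subset)
    show "bounded (I ` {0..S})" by (intro compact_imp_bounded compact_continuous_image Ic) simp
  qed (use clamp_in[OF S] in auto)
  ultimately show ?thesis
    unfolding picard_step_def I_def[symmetric] by (simp add: Bcontfun_inverse bcontfun_def)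
qed

lemma picard_step_iterate_dist:
  assumes G: "L-lipschitz_on UNIV G" and S: "S \<ge> 0"
  shows "dist (apply_bcontfun ((picard_step G p S ^^ m) v) t) (apply_bcontfun ((picard_step G p S ^^ m) w) t)
    \<le> (L * clamp S t) ^ m / fact m * dist v w"
proof (induction m arbitrary: t)
  case 0 then show ?case by (simp add: dist_bounded)
next
  case (Suc m)
  have L: "L \<ge> 0" using lipschitz_on_nonneg[OF G] .
  have Gc: "continuous_on UNIV G" by (rule lipschitz_on_continuous_on[OF G])
  define A where "A = (picard_step G p S ^^ m) v"
  define B where "B = (picard_step G p S ^^ m) w"
  define c where "c = clamp S t"
  have c: "0 \<le> c" "c \<le> S" using clamp_in[OF S, of t] by (auto simp: c_def)
  have I: "(\<lambda>s. G (apply_bcontfun u s)) integrable_on {0..c}" for u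
    by (intro integrable_continuous_real continuous_on_compose2[OF Gc]) auto
  have "dist (apply_bcontfun ((picard_step G p S ^^ Suc m) v) t) (apply_bcontfun ((picard_step G p S ^^ Suc m) w) t)
      = norm (integral {0..c} (\<lambda>s. G (apply_bcontfun A s) - G (apply_bcontfun B s)))"
    by (simp add: apply_picard_step[OF Gc S] A_def[symmetric] B_def[symmetric] c_def[symmetric]
        dist_norm integral_diff[OF I I])
  also have "\<dots> \<le> integral {0..c} (\<lambda>s. (L ^ Suc m * dist v w / fact m) * s ^ m)"
  proof (rule integral_norm_bound_integral)
    show "(\<lambda>s. G (apply_bcontfun A s) - G (apply_bcontfun B s)) integrable_on {0..c}"
      by (intro integrable_diff I)
    show "(\<lambda>s. (L ^ Suc m * dist v w / fact m) * s ^ m) integrable_on {0..c}"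
      by (intro integrable_continuous_real continuous_intros)
    fix s assume s: "s \<in> {0..c}"
    then have cs: "clamp S s = s" using c by (intro clamp_id) auto
    have "norm (G (apply_bcontfun A s) - G (apply_bcontfun B s))
        \<le> L * dist (apply_bcontfun A s) (apply_bcontfun B s)"
      using lipschitz_onD[OF G] by (simp add: dist_norm)
    also have "\<dots> \<le> L * ((L * clamp S s) ^ m / fact m * dist v w)"
      using Suc.IH[of s] L unfolding A_def B_def by (intro mult_left_mono) auto
    also have "\<dots> = (L ^ Suc m * dist v w / fact m) * s ^ m"
      by (simp add: cs power_mult_distrib field_simps)
    finally show "norm (G (apply_bcontfun A s) - G (apply_bcontfun B s))
        \<le> (L ^ Suc m * dist v w / fact m) * s ^ m" .
  qed
  also have "\<dots> = (L * clamp S t) ^ Suc m / fact (Suc m) * dist v w"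
  proof -
    have "((\<lambda>s. s ^ m) has_integral (c ^ Suc m / Suc m - 0 ^ Suc m / Suc m)) {0..c}"
      by (rule fundamental_theorem_of_calculus[OF c(1)], rule has_vector_derivative_at_within,
          rule has_real_derivative_iff_has_vector_derivative[THEN iffD1])
        (rule derivative_eq_intros refl | simp)+
    then show ?thesis
      by (simp add: integral_unique c_def power_mult_distrib field_simps)
  qed
  finally show ?case .
qed

lemma lipschitz_ode_exists:
  fixes G :: "'a::euclidean_space \<Rightarrow> 'a"
  assumes G: "L-lipschitz_on UNIV G" and S: "S \<ge> 0"
  obtains u where "u 0 = p" "\<And>t. t \<in> {0..S} \<Longrightarrow> (u has_vector_derivative G (u t)) (at t within {0..S})"
proof -
  have L: "L \<ge> 0" using lipschitz_on_nonneg[OF G] .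
  have Gc: "continuous_on UNIV G" by (rule lipschitz_on_continuous_on[OF G])
  define Psi where "Psi = picard_step G p S"
  have "(\<lambda>n. inverse (fact n) * (L * S) ^ n) \<longlonglongrightarrow> 0"
    by (rule summable_LIMSEQ_zero[OF summable_exp])
  then have "\<forall>\<^sub>F n in sequentially. inverse (fact n) * (L * S) ^ n < 1"
    by (rule order_tendstoD) simp
  then obtain m where m: "inverse (fact m) * (L * S) ^ m < 1"
    by (auto simp: eventually_sequentially)
  define k where "k = (L * S) ^ m / fact m"
  have k: "0 \<le> k" "k < 1" using m L S by (auto simp: k_def field_simps)
  have "dist ((Psi ^^ m) v) ((Psi ^^ m) w) \<le> k * dist v w" for v w
  proof (rule dist_bound)
    fix t
    have "(L * clamp S t) ^ m \<le> (L * S) ^ m"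
      using clamp_in[OF S, of t] L by (intro power_mono mult_left_mono) auto
    then have "(L * clamp S t) ^ m / fact m * dist v w \<le> k * dist v w"
      unfolding k_def by (intro mult_right_mono divide_right_mono) auto
    then show "dist (apply_bcontfun ((Psi ^^ m) v) t) (apply_bcontfun ((Psi ^^ m) w) t) \<le> k * dist v w"
      using picard_step_iterate_dist[OF G S, where p = p and m = m and v = v and w = w and t = t] unfolding Psi_def by linarith
  qed
  then obtain u where u: "(Psi ^^ m) u = u" and uniq: "\<And>z. (Psi ^^ m) z = z \<Longrightarrow> z = u"
    using banach_fix_type[OF k] by metis
  have "(Psi ^^ m) (Psi u) = Psi u" by (metis funpow_swap1 u)
  then have fixu: "Psi u = u" by (rule uniq)
  define U where "U t = apply_bcontfun u t" for t
  have Ueq: "U t = p + integral {0..t} (\<lambda>s. G (U s))" if "t \<in> {0..S}" for t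
    using apply_picard_step[OF Gc S, of p u t] fixu clamp_id[OF that] by (simp add: U_def Psi_def)
  show ?thesis
  proof
    show "U 0 = p" using Ueq[of 0] S by simp
    fix t assume t: "t \<in> {0..S}"
    have "continuous_on {0..S} (\<lambda>s. G (U s))"
      unfolding U_def by (rule continuous_on_compose2[OF Gc]) auto
    then have "((\<lambda>r. p + integral {0..r} (\<lambda>s. G (U s))) has_vector_derivative G (U t)) (at t within {0..S})"
      using integral_has_vector_derivative[OF _ t] by (auto intro!: derivative_eq_intros)
    then show "(U has_vector_derivative G (U t)) (at t within {0..S})"
      by (rule has_vector_derivative_transform[OF t, rotated]) (simp add: Ueq)
  qed
qed

lemma exp_neg_tendsto_0:
  fixes Q :: "real \<Rightarrow> real"
  assumes "filterlim Q at_top at_top" and "c > 0"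
  shows "((\<lambda>t. exp (- (c * Q t))) \<longlongrightarrow> 0) at_top"
proof -
  have "filterlim (\<lambda>t. - (c * Q t)) at_bot at_top"
    using filterlim_tendsto_pos_mult_at_top[OF tendsto_const assms(2,1)]
    by (simp add: filterlim_uminus_at_bot)
  from filterlim_compose[OF exp_at_bot this] show ?thesis .
qed

lemma integral_tendsto_at_top_if_windows:
  fixes q :: "real \<Rightarrow> real"
  assumes q0: "\<And>t. t \<ge> t0 \<Longrightarrow> q t \<ge> 0" and int: "\<And>b. q integrable_on {t0..b}"
    and "L > 0" "\<delta> > 0" and win: "\<And>t. t \<ge> t0 \<Longrightarrow> integral {t..t+L} q > \<delta>"
  shows "filterlim (\<lambda>t. integral {t0..t} q) at_top at_top"
proof -
  define Q where "Q t = integral {t0..t} q" for t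
  have Qcomb: "Q b = Q a + integral {a..b} q" if "t0 \<le> a" "a \<le> b" for a b
    unfolding Q_def using Henstock_Kurzweil_Integration.integral_combine[OF that int] by simp
  have Qmono: "Q a \<le> Q b" if "t0 \<le> a" "a \<le> b" for a b
  proof -
    have "integral {a..b} q \<ge> 0"
      using integrable_on_subinterval[OF int[of b], of a b] q0 that by (intro integral_nonneg) auto
    then show ?thesis using Qcomb[OF that] by simp
  qed
  have Qn: "Q (t0 + real n * L) \<ge> real n * \<delta>" for n
  proof (induction n)
    case (Suc n)
    have "t0 \<le> t0 + real n * L" using \<open>L > 0\<close> by simp
    from Qcomb[OF this, of "t0 + real n * L + L"] win[OF this] Suc.IH \<open>L > 0\<close>
    show ?case by (simp add: algebra_simps)
  qed (simp add: Q_def)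
  show ?thesis unfolding filterlim_at_top Q_def[symmetric]
  proof
    fix Z :: real
    obtain n :: nat where "Z / \<delta> < real n" using reals_Archimedean2 by blast
    then have "Z \<le> Q (t0 + real n * L)"
      using Qn[of n] \<open>\<delta> > 0\<close> by (simp add: field_simps)
    moreover have "\<forall>\<^sub>F t in at_top. Q (t0 + real n * L) \<le> Q t"
      using eventually_ge_at_top[of "t0 + real n * L"]
      by eventually_elim (use Qmono \<open>L > 0\<close> in simp)
    ultimately show "\<forall>\<^sub>F t in at_top. Z \<le> Q t"
      by (auto elim: eventually_mono)
  qed
qed

lemma pos_if_nonzero_connected:
  fixes y :: "real \<Rightarrow> real"
  assumes "continuous_on {T..} y" and "\<And>t. t \<ge> T \<Longrightarrow> y t \<noteq> 0"
    and "s \<ge> T" "y s > 0" and "t \<ge> T"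
  shows "y t > 0"
proof (rule ccontr)
  assume "\<not> y t > 0"
  then have "y t < 0" using assms(2)[OF assms(5)] by simp
  moreover have "connected (y ` {T..})"
    by (rule connected_continuous_image[OF assms(1)]) (simp add: is_interval_connected)
  ultimately have "0 \<in> y ` {T..}"
    using connectedD_interval[of "y ` {T..}" "y t" "y s" 0] assms(3-5) by auto
  then show False using assms(2) by auto
qed

section \<open>Pulse trains\<close>

definition pulses :: "real \<Rightarrow> (nat \<Rightarrow> real) \<Rightarrow> real \<Rightarrow> real" where
  "pulses DT tau t = (\<Sum>j. cpulse DT (t - tau j))"

definition pulse_edges :: "real \<Rightarrow> (nat \<Rightarrow> real) \<Rightarrow> real set" where
  "pulse_edges DT tau = range tau \<union> range (\<lambda>j. tau j + DT)"

lemma stim_eq_pulses: "stim DT tau x t = pulses DT tau t *\<^sub>R x"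
  by (simp add: stim_def pulses_def)

locale pulse_train =
  fixes DT :: real and tau :: "nat \<Rightarrow> real"
  assumes DT_pos: "DT > 0" and tau_sep: "\<And>j. tau (Suc j) > tau j + DT"
begin

lemma pulses_disjoint: "i < j \<Longrightarrow> tau i + DT < tau j"
proof (induction j)
  case (Suc j)
  show ?case
  proof (cases "i = j")
    case False
    then show ?thesis using Suc tau_sep[of j] DT_pos by simp
  qed (use tau_sep[of j] in simp)
qed simp

lemma pulse_starts_unbounded: obtains N where "\<And>j. j > N \<Longrightarrow> tau j > b"
proof -
  have lb: "tau 0 + real j * DT \<le> tau j" for j
  proof (induction j)
    case (Suc j) then show ?case using tau_sep[of j] by (simp add: algebra_simps)
  qed simp
  obtain N :: nat where N: "real N > (b - tau 0) / DT" using reals_Archimedean2 by blast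
  have "tau j > b" if "j > N" for j
  proof -
    have "real j > (b - tau 0) / DT" using N that by linarith
    then have "real j * DT > b - tau 0" using DT_pos by (simp add: field_simps)
    then show ?thesis using lb[of j] by linarith
  qed
  then show ?thesis using that by blast
qed

lemma pulses_eq: "pulses DT tau t = (if \<exists>j. tau j \<le> t \<and> t \<le> tau j + DT then 1 else 0)"
proof (cases "\<exists>j. tau j \<le> t \<and> t \<le> tau j + DT")
  case True
  then obtain j where j: "tau j \<le> t" "t \<le> tau j + DT" by blast
  have "cpulse DT (t - tau i) = 0" if "i \<noteq> j" for i
  proof -
    have "i < j \<or> j < i" using that by arith
    then have "\<not> (tau i \<le> t \<and> t \<le> tau i + DT)"
      using pulses_disjoint[of i j] pulses_disjoint[of j i] j by auto
    then show ?thesis by (auto simp: cpulse_def)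
  qed
  then have "(\<lambda>i. cpulse DT (t - tau i)) = (\<lambda>i. if i = j then cpulse DT (t - tau j) else 0)"
    by auto
  then have "pulses DT tau t = cpulse DT (t - tau j)"
    unfolding pulses_def using sums_single[of j "\<lambda>_. cpulse DT (t - tau j)"] sums_unique by metis
  then show ?thesis using True j by (simp add: cpulse_def)
next
  case False
  then have "(\<lambda>i. cpulse DT (t - tau i)) = (\<lambda>i. 0)" by (auto simp: cpulse_def fun_eq_iff)
  then show ?thesis using False by (simp add: pulses_def)
qed

lemma pulses_nonneg: "0 \<le> pulses DT tau t"
  and pulses_le_1: "pulses DT tau t \<le> 1"
  and pulses_0_or_1: "pulses DT tau t = 0 \<or> pulses DT tau t = 1"
  by (auto simp: pulses_eq)

lemma finite_pulse_edges: "finite (pulse_edges DT tau \<inter> {a..b})"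
proof -
  obtain N where N: "\<And>j. j > N \<Longrightarrow> tau j > b" using pulse_starts_unbounded by blast
  have "j \<le> N" if "tau j \<le> b" for j using N[of j] that by (cases "j \<le> N") auto
  then have "pulse_edges DT tau \<inter> {a..b} \<subseteq> tau ` {..N} \<union> (\<lambda>j. tau j + DT) ` {..N}"
    using DT_pos by (auto simp: pulse_edges_def)
  then show ?thesis by (rule finite_subset) auto
qed

lemma pulses_eventually_const:
  assumes "t \<notin> pulse_edges DT tau"
  shows "\<forall>\<^sub>F s in nhds t. pulses DT tau s = pulses DT tau t"
proof (cases "\<exists>j. tau j \<le> t \<and> t \<le> tau j + DT")
  case True
  then obtain j where "tau j \<le> t" "t \<le> tau j + DT" by blast
  then have "t \<in> {tau j<..<tau j + DT}" using assms by (auto simp: pulse_edges_def)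
  then show ?thesis
    unfolding eventually_nhds using True
    by (intro exI[of _ "{tau j<..<tau j + DT}"]) (auto simp: pulses_eq intro!: exI[of _ j])
next
  case False
  obtain N where N: "\<And>j. j > N \<Longrightarrow> tau j > t + 1" using pulse_starts_unbounded by blast
  define C where "C = (\<Union>j\<le>N. {tau j..tau j + DT})"
  have "closed C" unfolding C_def by (intro closed_UN) auto
  then have "open (- C \<inter> {..<t + 1})" by auto
  moreover have "t \<in> - C \<inter> {..<t + 1}" using False by (auto simp: C_def)
  moreover have "pulses DT tau s = pulses DT tau t" if s: "s \<in> - C \<inter> {..<t + 1}" for s
  proof -
    have "\<not> (tau j \<le> s \<and> s \<le> tau j + DT)" for j
      using s N[of j] by (cases "j \<le> N") (auto simp: C_def)
    then show ?thesis using False by (simp add: pulses_eq)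
  qed
  ultimately show ?thesis unfolding eventually_nhds by blast
qed

lemma isCont_pulses:
  assumes "t \<notin> pulse_edges DT tau"
  shows "isCont (pulses DT tau) t"
proof -
  have "\<forall>\<^sub>F s in at t. pulses DT tau s = pulses DT tau t"
    using pulses_eventually_const[OF assms] unfolding eventually_at_filter
    by (rule eventually_mono) simp
  then show ?thesis unfolding isCont_def by (rule tendsto_eventually)
qed

lemma pulses_integrable: "pulses DT tau integrable_on {a..b}"
  by (rule integrable_if_bounded_isCont_off_finite[OF finite_pulse_edges[of a b], where M = 1])
    (use isCont_pulses pulses_nonneg pulses_le_1 in auto)

end

section \<open>The learning vector field\<close>

definition learning_field :: "real \<Rightarrow> (real \<Rightarrow> real) \<Rightarrow> real \<Rightarrow> 'a::real_inner \<Rightarrow> 'a \<Rightarrow> 'a" where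
  "learning_field alpha f theta x w =
     (alpha * f (inner w x - theta) * inner w x) *\<^sub>R (x - inner w x *\<^sub>R w)"

definition excitation :: "(real \<Rightarrow> real) \<Rightarrow> real \<Rightarrow> 'a::real_inner \<Rightarrow> 'a \<Rightarrow> real" where
  "excitation f theta x w = f (inner w x - theta) * (inner w x)\<^sup>2"

definition orth_part :: "'a::real_inner \<Rightarrow> 'a \<Rightarrow> 'a" where
  "orth_part x w = w - (inner w x / inner x x) *\<^sub>R x"

lemma rhs_eq_pulses:
  assumes "pulses DT tau t = 0 \<or> pulses DT tau t = 1"
  shows "rhs alpha f theta DT tau x t w = pulses DT tau t *\<^sub>R learning_field alpha f theta x w"
  using assms by (auto simp: rhs_def learning_field_def stim_eq_pulses vout_def yout_def)

lemma excitation_integrand_eq_pulses: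
  assumes "pulses DT tau t = 0 \<or> pulses DT tau t = 1"
  shows "vout f (stim DT tau x t) w theta * (inner (stim DT tau x t) w)\<^sup>2
    = pulses DT tau t * excitation f theta x w"
  using assms by (auto simp: stim_eq_pulses vout_def yout_def excitation_def inner_commute)

lemma inner_learning_field:
  "inner w (learning_field alpha f theta x w) = - (alpha * excitation f theta x w) * (inner w w - 1)"
  by (simp add: learning_field_def excitation_def inner_diff_right algebra_simps power2_eq_square
      inner_commute)

lemma orth_part_learning_field:
  "orth_part x (learning_field alpha f theta x w) = - (alpha * excitation f theta x w) *\<^sub>R orth_part x w"
proof (cases "x = 0")
  case False
  then have "inner x x \<noteq> 0" by simp
  then show ?thesis
    by (simp add: orth_part_def learning_field_def excitation_def inner_diff_left
        power2_eq_square algebra_simps diff_divide_distrib)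
qed (simp add: orth_part_def learning_field_def excitation_def)

lemma orth_part_scaleR: "orth_part x (c *\<^sub>R v) = c *\<^sub>R orth_part x v"
  by (simp add: orth_part_def scaleR_diff_right)

lemma inner_square_eq_orth_part:
  assumes "x \<noteq> 0"
  shows "(inner w x)\<^sup>2 = inner x x * (inner w w - inner (orth_part x w) (orth_part x w))"
  using assms
  by (simp add: orth_part_def inner_diff_left inner_diff_right inner_commute power2_eq_square
      field_simps)

lemma continuous_on_learning_field:
  assumes "continuous_on UNIV f"
  shows "continuous_on S (learning_field alpha f theta x)"
proof -
  have "continuous_on S (\<lambda>w. inner w x - theta)"
    by (intro continuous_on_diff continuous_on_inner continuous_on_id continuous_on_const)
  then have "continuous_on S (\<lambda>w. f (inner w x - theta))"
    by (rule continuous_on_compose2[OF assms]) simp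
  then show ?thesis unfolding learning_field_def by (intro continuous_intros)
qed

lemma learning_field_lipschitz_on_cball:
  fixes x :: "'a::euclidean_space"
  assumes f: "\<And>u. \<exists>e>0. \<exists>K. K-lipschitz_on (cball u e) f"
  obtains C where "C-lipschitz_on (cball 0 R) (learning_field alpha f theta x)"
proof -
  define A where "A = cball (0::'a) R"
  have bnd: "bounded (g ` A)" if "K-lipschitz_on A g" for K and g :: "'a \<Rightarrow> 'b::metric_space"
    unfolding A_def
    by (intro compact_imp_bounded compact_continuous_image lipschitz_on_continuous_on[OF that[unfolded A_def]])
      simp
  have y: "(norm x)-lipschitz_on A (\<lambda>w. inner w x)"
  proof (rule lipschitz_onI)
    fix a b :: 'a
    have "\<bar>inner (a - b) x\<bar> \<le> norm (a - b) * norm x" by (rule Cauchy_Schwarz_ineq2)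
    then show "dist (inner a x) (inner b x) \<le> norm x * dist a b"
      by (simp add: dist_real_def dist_norm inner_diff_left mult.commute)
  qed simp
  then have y': "(norm x + 0)-lipschitz_on A (\<lambda>w. inner w x - theta)"
    by (rule lipschitz_on_diff[OF _ lipschitz_on_constant])
  have "compact ((\<lambda>w. inner w x - theta) ` A)"
    unfolding A_def
    by (intro compact_continuous_image continuous_on_diff continuous_on_inner continuous_on_id
        continuous_on_const) simp
  then obtain K where "K-lipschitz_on ((\<lambda>w. inner w x - theta) ` A) f"
    using lipschitz_on_compact_if_locally[OF f] by blast
  with y' have fy: "(K * (norm x + 0))-lipschitz_on A (\<lambda>w. f (inner w x - theta))"
    by (rule lipschitz_on_compose2)
  obtain K1 where "K1-lipschitz_on A (\<lambda>w. f (inner w x - theta) *\<^sub>R inner w x)"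
    by (rule lipschitz_on_scaleR[OF fy y bnd[OF fy] bnd[OF y]])
  then have g: "(\<bar>alpha\<bar> * K1)-lipschitz_on A (\<lambda>w. alpha * (f (inner w x - theta) *\<^sub>R inner w x))"
    by (rule lipschitz_on_cmult_real)
  obtain K2 where "K2-lipschitz_on A (\<lambda>w. inner w x *\<^sub>R w)"
    by (rule lipschitz_on_scaleR[OF y lipschitz_on_id bnd[OF y] bnd[OF lipschitz_on_id]])
  then have h: "(0 + K2)-lipschitz_on A (\<lambda>w. x - inner w x *\<^sub>R w)"
    by (rule lipschitz_on_diff[OF lipschitz_on_constant])
  obtain C where "C-lipschitz_on A
      (\<lambda>w. (alpha * (f (inner w x - theta) *\<^sub>R inner w x)) *\<^sub>R (x - inner w x *\<^sub>R w))"
    by (rule lipschitz_on_scaleR[OF g h bnd[OF g] bnd[OF h]])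
  then show ?thesis
    using that unfolding A_def learning_field_def by (simp add: mult.assoc)
qed

definition cutoff :: "real \<Rightarrow> 'a::real_normed_vector \<Rightarrow> real" where
  "cutoff R w = max 0 (min 1 (2 - norm w / R))"

lemma cutoff_lipschitz:
  assumes "R > 0"
  shows "(1 / R)-lipschitz_on UNIV (cutoff R)"
proof (rule lipschitz_onI)
  fix a b :: 'a
  have "\<bar>max 0 (min 1 u) - max 0 (min 1 v)\<bar> \<le> \<bar>u - v\<bar>" for u v :: real
    by (auto simp: max_def min_def abs_if)
  then have "\<bar>cutoff R a - cutoff R b\<bar> \<le> \<bar>(2 - norm a / R) - (2 - norm b / R)\<bar>"
    unfolding cutoff_def .
  also have "\<dots> = \<bar>norm b - norm a\<bar> / R"
    using assms by (simp add: diff_divide_distrib[symmetric] abs_divide)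
  also have "\<dots> \<le> dist a b / R"
    using assms norm_triangle_ineq3[of b a]
    by (intro divide_right_mono) (auto simp: dist_norm norm_minus_commute)
  finally show "dist (cutoff R a) (cutoff R b) \<le> 1 / R * dist a b" by (simp add: dist_real_def)
qed (use assms in simp)

lemma cutoff_nonneg: "0 \<le> cutoff R w"
  by (simp add: cutoff_def)

lemma cutoff_eq_1: "R > 0 \<Longrightarrow> norm w \<le> R \<Longrightarrow> cutoff R w = 1"
  and cutoff_eq_0: "R > 0 \<Longrightarrow> norm w \<ge> 2 * R \<Longrightarrow> cutoff R w = 0"
  by (auto simp: cutoff_def field_simps)

lemma cutoff_learning_field_lipschitz:
  fixes x :: "'a::euclidean_space"
  assumes f: "\<And>u. \<exists>e>0. \<exists>K. K-lipschitz_on (cball u e) f" and R: "R > 0"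
  obtains L where "L-lipschitz_on UNIV (\<lambda>w. cutoff R w *\<^sub>R learning_field alpha f theta x w)"
proof -
  define B where "B = cball (0::'a) (2 * R)"
  define p where "p = closest_point B"
  have B: "convex B" "closed B" "B \<noteq> {}" using R by (auto simp: B_def)
  have pB: "p w \<in> B" for w unfolding p_def by (rule closest_point_in_set[OF B(2,3)])
  have p_id: "p w = w" if "norm w \<le> 2 * R" for w
    unfolding p_def by (rule closest_point_self) (use that in \<open>simp add: B_def\<close>)
  have "1-lipschitz_on UNIV p"
    unfolding p_def using closest_point_lipschitz[OF B] by (intro lipschitz_onI) auto
  moreover obtain C where C: "C-lipschitz_on B (learning_field alpha f theta x)"
    using learning_field_lipschitz_on_cball[OF f] unfolding B_def by blast
  ultimately have "(C * 1)-lipschitz_on UNIV (\<lambda>w. learning_field alpha f theta x (p w))"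
    using pB by (intro lipschitz_on_compose2) (auto intro: lipschitz_on_subset[OF C])
  moreover have "bounded (range (\<lambda>w. learning_field alpha f theta x (p w)))"
  proof (rule bounded_subset)
    show "bounded (learning_field alpha f theta x ` B)"
      unfolding B_def by (intro compact_imp_bounded compact_continuous_image
          lipschitz_on_continuous_on[OF C[unfolded B_def]]) simp
  qed (use pB in auto)
  moreover have "bounded (range (cutoff R :: 'a \<Rightarrow> real))"
    by (intro boundedI[of _ 1]) (auto simp: cutoff_def)
  ultimately obtain L where "L-lipschitz_on UNIV (\<lambda>w. cutoff R w *\<^sub>R learning_field alpha f theta x (p w))"
    using lipschitz_on_scaleR[OF cutoff_lipschitz[OF R]] by metis
  moreover have "cutoff R w *\<^sub>R learning_field alpha f theta x (p w)
      = cutoff R w *\<^sub>R learning_field alpha f theta x w" for w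
    using p_id[of w] cutoff_eq_0[OF R, of w] by (cases "norm w \<le> 2 * R") auto
  ultimately show ?thesis using that by simp
qed

section \<open>Solutions of the pulsed learning equation\<close>

lemma solves_on_subset: "solves_on F t0 w0 A w \<Longrightarrow> B \<subseteq> A \<Longrightarrow> solves_on F t0 w0 B w"
  unfolding solves_on_def by (auto intro: continuous_on_subset)

locale pulsed_learning = pulse_train +
  fixes f :: "real \<Rightarrow> real" and alpha theta :: real and x :: "'a::euclidean_space"
  assumes f_cont: "continuous_on UNIV f" and f_loclip: "\<And>u. \<exists>e>0. \<exists>K. K-lipschitz_on (cball u e) f"
    and f_nonpos: "\<And>u. u \<le> 0 \<Longrightarrow> f u = 0" and f_pos: "\<And>u. u > 0 \<Longrightarrow> f u > 0"
    and alpha_pos: "alpha > 0"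
begin

abbreviation F :: "'a \<Rightarrow> 'a" where
  "F \<equiv> learning_field alpha f theta x"

abbreviation solves :: "real \<Rightarrow> 'a \<Rightarrow> real set \<Rightarrow> (real \<Rightarrow> 'a) \<Rightarrow> bool" where
  "solves \<equiv> solves_on (rhs alpha f theta DT tau x)"

lemma rhs_eq: "rhs alpha f theta DT tau x t w = pulses DT tau t *\<^sub>R F w"
  by (rule rhs_eq_pulses[OF pulses_0_or_1])

lemma excitation_nonneg: "0 \<le> excitation f theta x w"
proof -
  have "0 \<le> f u" for u using f_nonpos[of u] f_pos[of u] by (cases "u \<le> 0") auto
  then show ?thesis by (simp add: excitation_def)
qed

lemma cutoff_flow_norm_le:
  assumes R: "R \<ge> 2" "norm (u 0) \<le> R" and t: "t \<in> {0..S}"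
    and u: "\<And>t. t \<in> {0..S} \<Longrightarrow> (u has_vector_derivative cutoff R (u t) *\<^sub>R F (u t)) (at t within {0..S})"
  shows "norm (u t) \<le> R"
proof -
  define V where "V s = inner (u s) (u s)" for s
  \<comment> \<open>\<open>(V - 1)\<^sup>2\<close> is a Lyapunov function of the cut-off flow\<close>
  have "(V t - 1)\<^sup>2 \<le> (V 0 - 1)\<^sup>2"
  proof (rule DERIV_within_nonpos_imp_le[where h = "\<lambda>s. (V s - 1)\<^sup>2"])
    show "0 \<le> t" using t by simp
    fix s assume s: "s \<in> {0..t}"
    define k where "k = cutoff R (u s) * (alpha * excitation f theta x (u s))"
    define G where "G = cutoff R (u s) *\<^sub>R F (u s)"
    have "(u has_vector_derivative G) (at s within {0..t})"
      unfolding G_def by (rule has_vector_derivative_within_subset[OF u]) (use s t in auto)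
    from has_vector_derivative_inner[OF this this]
    have "(V has_real_derivative inner (u s) G + inner G (u s)) (at s within {0..t})"
      unfolding V_def .
    moreover have "inner (u s) G = - k * (V s - 1)"
      by (simp add: G_def V_def k_def inner_learning_field)
    ultimately have "(V has_real_derivative - 2 * k * (V s - 1)) (at s within {0..t})"
      by (simp add: inner_commute[of G] mult.assoc)
    then show "((\<lambda>s. (V s - 1)\<^sup>2) has_real_derivative - 4 * k * (V s - 1)\<^sup>2) (at s within {0..t})"
      by (auto intro!: derivative_eq_intros simp: power2_eq_square)
    have "0 \<le> k" unfolding k_def
      using cutoff_nonneg excitation_nonneg alpha_pos by (intro mult_nonneg_nonneg) auto
    then show "- 4 * k * (V s - 1)\<^sup>2 \<le> 0" by simp
  qed
  then have "\<bar>V t - 1\<bar> \<le> \<bar>V 0 - 1\<bar>" by (simp add: abs_le_square_iff)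
  moreover have "0 \<le> V 0" by (simp add: V_def)
  ultimately have "V t \<le> max (V 0) 2" by (auto simp: abs_if split: if_splits)
  also have "\<dots> \<le> R\<^sup>2"
    using R power_mono[OF R(2), of 2] power_mono[OF R(1), of 2]
    by (simp add: V_def power2_norm_eq_inner)
  finally show ?thesis using R by (simp add: V_def power2_norm_eq_inner[symmetric] abs_le_square_iff)
qed

lemma autonomous_flow_exists:
  assumes "S \<ge> 0"
  obtains \<Phi> where "\<Phi> 0 = w0"
    "\<And>t. t \<in> {0..S} \<Longrightarrow> (\<Phi> has_vector_derivative F (\<Phi> t)) (at t within {0..S})"
proof -
  define R where "R = max (norm w0) 2"
  have R: "R \<ge> 2" "R > 0" "norm w0 \<le> R" by (auto simp: R_def)
  obtain L where "L-lipschitz_on UNIV (\<lambda>w. cutoff R w *\<^sub>R F w)"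
    using cutoff_learning_field_lipschitz[OF f_loclip R(2)] by blast
  then obtain u where u0: "u 0 = w0"
    and u: "\<And>t. t \<in> {0..S} \<Longrightarrow> (u has_vector_derivative cutoff R (u t) *\<^sub>R F (u t)) (at t within {0..S})"
    using lipschitz_ode_exists[where p = w0, OF _ assms] by blast
  have "cutoff R (u t) = 1" if "t \<in> {0..S}" for t
    using cutoff_flow_norm_le[OF R(1) _ that u] u0 R by (auto intro: cutoff_eq_1)
  with u show ?thesis by (intro that[of u, OF u0]) force
qed

lemma solution_exists_on:
  assumes T: "T \<ge> t0"
  obtains w where "solves t0 w0 {t0..T} w"
proof -
  define N where "N t = integral {t0..t} (pulses DT tau)" for t
  define D where "D = pulse_edges DT tau \<inter> {t0..T}"
  have D: "finite D" unfolding D_def by (rule finite_pulse_edges)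
  have N0: "N t0 = 0" by (simp add: N_def)
  have N_range: "N t \<in> {0..T - t0}" if "t \<in> {t0..T}" for t
  proof -
    have "0 \<le> N t" unfolding N_def
      using pulses_integrable pulses_nonneg by (intro integral_nonneg) auto
    moreover have "N t \<le> integral {t0..t} (\<lambda>_. 1::real)" unfolding N_def
      using pulses_integrable pulses_le_1 by (intro integral_le) auto
    ultimately show ?thesis using that by auto
  qed
  have Nc: "continuous_on {t0..T} N"
    unfolding N_def by (rule indefinite_integral_continuous_1[OF pulses_integrable])
  obtain \<Phi> where \<Phi>0: "\<Phi> 0 = w0"
    and \<Phi>: "\<And>t. t \<in> {0..T - t0} \<Longrightarrow> (\<Phi> has_vector_derivative F (\<Phi> t)) (at t within {0..T - t0})"
    using autonomous_flow_exists[of "T - t0" w0] T by auto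
  have \<Phi>c: "continuous_on {0..T - t0} \<Phi>"
    using \<Phi> has_vector_derivative_continuous continuous_on_eq_continuous_within by blast
  \<comment> \<open>the solution runs along the autonomous flow at the speed given by the pulse train\<close>
  define w where "w t = \<Phi> (N t)" for t
  have wc: "continuous_on {t0..T} w" unfolding w_def
    by (rule continuous_on_compose2[OF \<Phi>c Nc]) (use N_range in auto)
  have wd: "(w has_vector_derivative pulses DT tau t *\<^sub>R F (w t)) (at t)"
    if t: "t \<in> {t0<..<T} - D" for t
  proof -
    have tD: "t \<notin> pulse_edges DT tau" and t': "t \<in> {t0..T} - D" using t by (auto simp: D_def)
    have "(N has_vector_derivative pulses DT tau t) (at t within {t0..T} - D)"
      unfolding N_def
      by (rule integral_has_vector_derivative_continuous_at[OF pulses_integrable t' D])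
        (rule continuous_within_subset[OF isCont_pulses[OF tD]], simp)
    moreover have "(\<Phi> has_vector_derivative F (\<Phi> (N t))) (at (N t) within N ` ({t0..T} - D))"
      by (rule has_vector_derivative_within_subset[OF \<Phi>[OF N_range]]) (use t' N_range in auto)
    ultimately have "(w has_vector_derivative pulses DT tau t *\<^sub>R F (w t)) (at t within {t0..T} - D)"
      unfolding w_def using vector_diff_chain_within[unfolded o_def] by blast
    then have "(w has_vector_derivative pulses DT tau t *\<^sub>R F (w t)) (at t within {t0<..<T} - D)"
      by (rule has_vector_derivative_within_subset) auto
    moreover have "open ({t0<..<T} - D)" using D by (intro open_Diff finite_imp_closed) auto
    ultimately show ?thesis using t has_vector_derivative_within_open by blast
  qed
  have "solves t0 w0 {t0..T} w"
    unfolding solves_on_def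
  proof (intro conjI ballI)
    show "w t0 = w0" by (simp add: w_def N0 \<Phi>0)
    fix t assume t: "t \<in> {t0..T}"
    have "((\<lambda>s. pulses DT tau s *\<^sub>R F (w s)) has_integral (w t - w t0)) {t0..t}"
      by (rule fundamental_theorem_of_calculus_interior_strong[OF D])
        (use t wd in \<open>auto intro: continuous_on_subset[OF wc]\<close>)
    then show "((\<lambda>\<tau>. rhs alpha f theta DT tau x \<tau> (w \<tau>)) has_integral (w t - w0)) {t0..t}"
      by (simp add: rhs_eq w_def N0 \<Phi>0)
  qed (rule wc)
  then show ?thesis by (rule that)
qed

lemma solution_unique:
  assumes u: "solves t0 w0 {t0..T} u" and v: "solves t0 w0 {t0..T} v" and t: "t \<in> {t0..T}"
  shows "u t = v t"
proof -
  have uc: "continuous_on {t0..T} u" and vc: "continuous_on {t0..T} v"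
    using u v by (auto simp: solves_on_def)
  have "bounded (u ` {t0..T} \<union> v ` {t0..T})"
    by (intro compact_imp_bounded compact_Un compact_continuous_image uc vc) simp_all
  then obtain R where "\<forall>z \<in> u ` {t0..T} \<union> v ` {t0..T}. norm z \<le> R"
    by (auto simp: bounded_iff)
  then have R: "u s \<in> cball 0 R \<and> v s \<in> cball 0 R" if "s \<in> {t0..T}" for s
    using that by auto
  obtain C where C: "C-lipschitz_on (cball 0 R) F"
    using learning_field_lipschitz_on_cball[OF f_loclip] by blast
  define e where "e s = norm (u s - v s)" for s
  have ec: "continuous_on {t0..T} e" unfolding e_def by (intro continuous_intros uc vc)
  \<comment> \<open>the integral equations give \<open>e \<le> C \<integral> e\<close>, so Gronwall's inequality applies\<close>
  have "e r \<le> C * integral {t0..r} e" if r: "r \<in> {t0..T}" for r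
  proof -
    have "((\<lambda>s. rhs alpha f theta DT tau x s (u s) - rhs alpha f theta DT tau x s (v s))
        has_integral (u r - v r)) {t0..r}"
      using has_integral_diff[of _ "u r - w0" _ _ "v r - w0"] u v r by (force simp: solves_on_def)
    then have "((\<lambda>s. pulses DT tau s *\<^sub>R (F (u s) - F (v s))) has_integral (u r - v r)) {t0..r}"
      by (simp add: rhs_eq scaleR_diff_right)
    then have int: "(\<lambda>s. pulses DT tau s *\<^sub>R (F (u s) - F (v s))) integrable_on {t0..r}"
      and "e r = norm (integral {t0..r} (\<lambda>s. pulses DT tau s *\<^sub>R (F (u s) - F (v s))))"
      by (auto simp: e_def integral_unique)
    note this(2)
    also have "\<dots> \<le> integral {t0..r} (\<lambda>s. C * e s)"
    proof (rule integral_norm_bound_integral[OF int])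
      show "(\<lambda>s. C * e s) integrable_on {t0..r}"
        by (intro integrable_continuous_real continuous_intros continuous_on_subset[OF ec]) (use r in auto)
      fix s assume s: "s \<in> {t0..r}"
      have "norm (F (u s) - F (v s)) \<le> C * e s"
        using lipschitz_onD[OF C] R[of s] s r by (auto simp: e_def dist_norm)
      then show "norm (pulses DT tau s *\<^sub>R (F (u s) - F (v s))) \<le> C * e s"
        using pulses_nonneg[of s] pulses_le_1[of s] mult_mono[of _ 1 _ "C * e s"]
        by force
    qed
    finally show ?thesis by simp
  qed
  then have "e t = 0"
    using gronwall_zero[OF _ ec _ lipschitz_on_nonneg[OF C] _ t] t by (auto simp: e_def)
  then show ?thesis by (simp add: e_def)
qed

lemma solution_exists: obtains w where "solves t0 w0 {t0..} w"
proof -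
  define W where "W T = (SOME u. solves t0 w0 {t0..T} u)" for T
  have W: "solves t0 w0 {t0..T} (W T)" if "T \<ge> t0" for T
    unfolding W_def using solution_exists_on[OF that] by (metis someI_ex)
  define w where "w t = W t t" for t
  have agree: "w t = W T t" if "t0 \<le> t" "t \<le> T" for t T
    unfolding w_def
    by (rule solution_unique[OF W solves_on_subset[OF W]]) (use that in auto)
  have "solves t0 w0 {t0..} w"
    unfolding solves_on_def
  proof (intro conjI ballI)
    show "w t0 = w0" using W[of t0] by (simp add: w_def solves_on_def)
    show "continuous_on {t0..} w"
      unfolding continuous_on_eq_continuous_within
    proof
      fix t assume t: "t \<in> {t0..}"
      have "continuous_on {t0..t+1} (W (t+1))" using W[of "t+1"] t by (simp add: solves_on_def)
      then have "continuous_on {t0..t+1} w" by (rule continuous_on_eq) (use agree in auto)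
      then have "continuous (at t within {t0..t+1}) w"
        using t by (simp add: continuous_on_eq_continuous_within)
      moreover have "at t within {t0..t+1} = at t within {t0..}"
        by (rule at_within_nhd[where S = "{..<t+1}"]) auto
      ultimately show "continuous (at t within {t0..}) w" by (simp add: continuous_within)
    qed
    fix t assume t: "t \<in> {t0..}"
    have "((\<lambda>\<tau>. rhs alpha f theta DT tau x \<tau> (W t \<tau>)) has_integral (w t - w0)) {t0..t}"
      using W[of t] t by (simp add: solves_on_def w_def)
    then show "((\<lambda>\<tau>. rhs alpha f theta DT tau x \<tau> (w \<tau>)) has_integral (w t - w0)) {t0..t}"
      by (rule has_integral_eq[rotated]) (use agree t in auto)
  qed
  then show ?thesis by (rule that)
qed

lemma solution_has_derivative:
  assumes w: "solves t0 w0 {t0..} w" and t: "t0 < t" "t \<notin> pulse_edges DT tau"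
  shows "(w has_vector_derivative pulses DT tau t *\<^sub>R F (w t)) (at t)"
proof -
  define D where "D = pulse_edges DT tau \<inter> {t0..t + 1}"
  have D: "finite D" unfolding D_def by (rule finite_pulse_edges)
  have t': "t \<in> {t0..t + 1} - D" "t \<in> {t0<..<t + 1} - D" using t by (auto simp: D_def)
  have wc: "continuous_on {t0..} w" and wI: "\<And>s. s \<ge> t0 \<Longrightarrow>
      ((\<lambda>\<tau>. rhs alpha f theta DT tau x \<tau> (w \<tau>)) has_integral (w s - w0)) {t0..s}"
    using w by (auto simp: solves_on_def)
  have "continuous (at t within {t0..}) w" using wc t by (simp add: continuous_on_eq_continuous_within)
  then have "continuous (at t within {t0..t + 1} - D) w" by (rule continuous_within_subset) auto
  moreover have "isCont F (w t)"
    using continuous_on_learning_field[OF f_cont, of UNIV alpha theta x]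
    by (simp add: continuous_on_eq_continuous_at)
  ultimately have "continuous (at t within {t0..t + 1} - D) (\<lambda>\<tau>. F (w \<tau>))"
    by (rule continuous_within_compose3[rotated])
  then have c: "continuous (at t within {t0..t + 1} - D) (\<lambda>\<tau>. rhs alpha f theta DT tau x \<tau> (w \<tau>))"
    unfolding rhs_eq
    by (rule continuous_scaleR[OF continuous_at_imp_continuous_at_within[OF isCont_pulses[OF t(2)]]])
  have "(\<lambda>\<tau>. rhs alpha f theta DT tau x \<tau> (w \<tau>)) integrable_on {t0..t + 1}"
    using wI[of "t + 1"] t by auto
  from integral_has_vector_derivative_continuous_at[OF this t'(1) D c]
  have "((\<lambda>s. integral {t0..s} (\<lambda>\<tau>. rhs alpha f theta DT tau x \<tau> (w \<tau>)))
      has_vector_derivative rhs alpha f theta DT tau x t (w t)) (at t within {t0..t + 1} - D)" .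
  from has_vector_derivative_add[OF has_vector_derivative_const[of w0] this]
  have "((\<lambda>s. w0 + integral {t0..s} (\<lambda>\<tau>. rhs alpha f theta DT tau x \<tau> (w \<tau>)))
      has_vector_derivative rhs alpha f theta DT tau x t (w t)) (at t within {t0..t + 1} - D)"
    by simp
  then have "(w has_vector_derivative rhs alpha f theta DT tau x t (w t)) (at t within {t0..t + 1} - D)"
  proof (rule has_vector_derivative_transform[OF t'(1), rotated])
    fix s assume "s \<in> {t0..t + 1} - D"
    then show "w s = w0 + integral {t0..s} (\<lambda>\<tau>. rhs alpha f theta DT tau x \<tau> (w \<tau>))"
      using integral_unique[OF wI[of s]] by simp
  qed
  then have "(w has_vector_derivative rhs alpha f theta DT tau x t (w t)) (at t within {t0<..<t + 1} - D)"
    by (rule has_vector_derivative_within_subset) auto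
  moreover have "open ({t0<..<t + 1} - D)" using D by (intro open_Diff finite_imp_closed) auto
  ultimately have "(w has_vector_derivative rhs alpha f theta DT tau x t (w t)) (at t)"
    using has_vector_derivative_within_open[THEN iffD1, OF t'(2)] by blast
  then show ?thesis by (simp add: rhs_eq)
qed

definition excitation_along :: "(real \<Rightarrow> 'a) \<Rightarrow> real \<Rightarrow> real" where
  "excitation_along w t = pulses DT tau t * excitation f theta x (w t)"

lemma excitation_along_nonneg: "excitation_along w t \<ge> 0"
  unfolding excitation_along_def using pulses_nonneg excitation_nonneg by simp

lemma isCont_excitation_along:
  assumes "isCont w t" "t \<notin> pulse_edges DT tau"
  shows "isCont (excitation_along w) t"
proof -
  have "isCont (\<lambda>s. inner (w s) x - theta) t" using assms(1) by (intro continuous_intros)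
  moreover have "isCont f (inner (w t) x - theta)"
    using f_cont by (simp add: continuous_on_eq_continuous_at)
  ultimately have "isCont (\<lambda>s. f (inner (w s) x - theta)) t" by (rule isCont_o2)
  then show ?thesis
    unfolding excitation_along_def excitation_def
    by (intro continuous_intros assms isCont_pulses)
qed

lemma excitation_along_integrable:
  assumes w: "solves t0 w0 {t0..} w"
  shows "excitation_along w integrable_on {t0..b}"
proof -
  have wc: "continuous_on {t0..b} w" using solves_on_subset[OF w, of "{t0..b}"] by (simp add: solves_on_def)
  then have "continuous_on {t0..b} (\<lambda>s. inner (w s) x - theta)" by (intro continuous_intros)
  then have "continuous_on {t0..b} (\<lambda>s. f (inner (w s) x - theta))"
    by (rule continuous_on_compose2[OF f_cont]) simp
  then have "continuous_on {t0..b} (\<lambda>s. excitation f theta x (w s))"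
    unfolding excitation_def by (intro continuous_intros wc)
  then have "bounded ((\<lambda>s. excitation f theta x (w s)) ` {t0..b})"
    using compact_Icc by (intro compact_imp_bounded compact_continuous_image) auto
  then obtain M where "\<forall>s \<in> {t0..b}. \<bar>excitation f theta x (w s)\<bar> \<le> M"
    unfolding bounded_iff by auto
  then have M: "\<And>s. s \<in> {t0..b} \<Longrightarrow> \<bar>excitation f theta x (w s)\<bar> \<le> M" by blast
  show ?thesis
  proof (rule integrable_if_bounded_isCont_off_finite[where M = M])
    show "finite (pulse_edges DT tau \<inter> {t0..b} \<union> {t0, b})" using finite_pulse_edges by simp
    fix s
    assume "s \<in> {t0..b} - (pulse_edges DT tau \<inter> {t0..b} \<union> {t0, b})"
    then have "t0 < s" "s \<notin> pulse_edges DT tau" by auto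
    from has_vector_derivative_continuous[OF solution_has_derivative[OF w this]] this(2)
    show "isCont (excitation_along w) s" by (rule isCont_excitation_along)
  next
    fix s assume "s \<in> {t0..b}"
    have "\<bar>pulses DT tau s\<bar> * \<bar>excitation f theta x (w s)\<bar> \<le> 1 * M"
      using M[OF \<open>s \<in> {t0..b}\<close>] pulses_nonneg[of s] pulses_le_1[of s] by (intro mult_mono) auto
    then show "norm (excitation_along w s) \<le> M" by (simp add: excitation_along_def abs_mult)
  qed
qed

lemma integral_excitation_along_has_derivative:
  assumes w: "solves t0 w0 {t0..} w" and t: "t0 < t" "t \<notin> pulse_edges DT tau"
  shows "((\<lambda>s. integral {t0..s} (excitation_along w)) has_real_derivative excitation_along w t) (at t)"
proof -
  define D where "D = pulse_edges DT tau \<inter> {t0..t + 1} \<union> {t0}"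
  have D: "finite D" using finite_pulse_edges by (simp add: D_def)
  have t': "t \<in> {t0..t + 1} - D" "t \<in> {t0<..<t + 1} - D" using t by (auto simp: D_def)
  have "isCont w t" by (rule has_vector_derivative_continuous[OF solution_has_derivative[OF w t]])
  then have "isCont (excitation_along w) t" using t(2) by (rule isCont_excitation_along)
  from integral_has_vector_derivative_continuous_at[OF excitation_along_integrable[OF w] t'(1) D
      continuous_at_imp_continuous_at_within[OF this]]
  have "((\<lambda>s. integral {t0..s} (excitation_along w)) has_vector_derivative excitation_along w t)
      (at t within {t0<..<t + 1} - D)"
    by (rule has_vector_derivative_within_subset) auto
  moreover have "open ({t0<..<t + 1} - D)" using D by (intro open_Diff finite_imp_closed) auto
  ultimately show ?thesis
    using has_vector_derivative_within_open[THEN iffD1, OF t'(2)]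
    by (simp add: has_real_derivative_iff_has_vector_derivative)
qed

lemma norm_square_decay:
  assumes w: "solves t0 w0 {t0..} w" and t: "t \<ge> t0"
  shows "inner (w t) (w t) - 1
    = exp (- (2 * alpha * integral {t0..t} (excitation_along w))) * (inner w0 w0 - 1)"
proof -
  have wc: "continuous_on {t0..t} w" using solves_on_subset[OF w, of "{t0..t}"] by (simp add: solves_on_def)
  have "(\<lambda>s. inner (w s) (w s) - 1) t
      = exp (- (2 * alpha * integral {t0..t} (excitation_along w))) *\<^sub>R (\<lambda>s. inner (w s) (w s) - 1) t0"
  proof (rule exp_integrating_factor[OF t finite_pulse_edges[of t0 t], where k = "excitation_along w"])
    show "continuous_on {t0..t} (\<lambda>s. inner (w s) (w s) - 1)" by (intro continuous_intros wc)
    show "continuous_on {t0..t} (\<lambda>s. integral {t0..s} (excitation_along w))"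
      by (rule indefinite_integral_continuous_1[OF excitation_along_integrable[OF w]])
    fix s assume "s \<in> {t0<..<t} - pulse_edges DT tau \<inter> {t0..t}"
    then have s: "t0 < s" "s \<notin> pulse_edges DT tau" by auto
    show "((\<lambda>s. integral {t0..s} (excitation_along w)) has_real_derivative excitation_along w s) (at s)"
      by (rule integral_excitation_along_has_derivative[OF w s])
    define G where "G = pulses DT tau s *\<^sub>R F (w s)"
    have d: "(w has_vector_derivative G) (at s)" unfolding G_def by (rule solution_has_derivative[OF w s])
    have "inner (w s) G = - (alpha * excitation_along w s) * (inner (w s) (w s) - 1)"
      by (simp add: G_def inner_learning_field excitation_along_def)
    then have "inner (w s) G + inner G (w s) - 0
        = - (2 * alpha * excitation_along w s) * (inner (w s) (w s) - 1)"
      by (simp add: inner_commute[of G])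
    moreover have "((\<lambda>s. inner (w s) (w s) - 1) has_real_derivative inner (w s) G + inner G (w s) - 0) (at s)"
      by (rule DERIV_diff[OF has_vector_derivative_inner[OF d d] DERIV_const])
    ultimately show "((\<lambda>s. inner (w s) (w s) - 1) has_vector_derivative
        - (2 * alpha * excitation_along w s) *\<^sub>R (inner (w s) (w s) - 1)) (at s)"
      by (simp add: has_real_derivative_iff_has_vector_derivative)
  qed simp
  then show ?thesis using w by (simp add: solves_on_def)
qed

lemma orth_part_decay:
  assumes w: "solves t0 w0 {t0..} w" and t: "t \<ge> t0"
  shows "orth_part x (w t) = exp (- (alpha * integral {t0..t} (excitation_along w))) *\<^sub>R orth_part x w0"
proof -
  have wc: "continuous_on {t0..t} w" using solves_on_subset[OF w, of "{t0..t}"] by (simp add: solves_on_def)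
  have "(\<lambda>s. orth_part x (w s)) t
      = exp (- (alpha * integral {t0..t} (excitation_along w))) *\<^sub>R (\<lambda>s. orth_part x (w s)) t0"
  proof (rule exp_integrating_factor[OF t finite_pulse_edges[of t0 t], where k = "excitation_along w"])
    show "continuous_on {t0..t} (\<lambda>s. orth_part x (w s))"
      unfolding orth_part_def divide_inverse by (intro continuous_intros wc)
    show "continuous_on {t0..t} (\<lambda>s. integral {t0..s} (excitation_along w))"
      by (rule indefinite_integral_continuous_1[OF excitation_along_integrable[OF w]])
    fix s assume "s \<in> {t0<..<t} - pulse_edges DT tau \<inter> {t0..t}"
    then have s: "t0 < s" "s \<notin> pulse_edges DT tau" by auto
    show "((\<lambda>s. integral {t0..s} (excitation_along w)) has_real_derivative excitation_along w s) (at s)"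
      by (rule integral_excitation_along_has_derivative[OF w s])
    define G where "G = pulses DT tau s *\<^sub>R F (w s)"
    have d: "(w has_vector_derivative G) (at s)" unfolding G_def by (rule solution_has_derivative[OF w s])
    have "((\<lambda>s. inner (w s) x / inner x x) has_real_derivative (inner (w s) 0 + inner G x) / inner x x) (at s)"
      by (rule DERIV_cdivide[OF has_vector_derivative_inner[OF d has_vector_derivative_const]])
    from has_vector_derivative_diff[OF d has_vector_derivative_scaleR[OF this has_vector_derivative_const]]
    have "((\<lambda>s. orth_part x (w s)) has_vector_derivative orth_part x G) (at s)"
      by (simp add: orth_part_def)
    then show "((\<lambda>s. orth_part x (w s)) has_vector_derivative
        - (alpha * excitation_along w s) *\<^sub>R orth_part x (w s)) (at s)"
      by (simp add: G_def orth_part_scaleR orth_part_learning_field excitation_along_def mult.assoc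
          mult.left_commute)
  qed simp
  then show ?thesis using w by (simp add: solves_on_def)
qed

lemma solution_bounded:
  assumes w: "solves t0 w0 {t0..} w"
  shows "bounded (w ` {t0..})"
proof -
  define B where "B = 1 + \<bar>inner w0 w0 - 1\<bar>"
  have "(norm (w t))\<^sup>2 \<le> B" if t: "t \<ge> t0" for t
  proof -
    define E where "E = exp (- (2 * alpha * integral {t0..t} (excitation_along w)))"
    have "integral {t0..t} (excitation_along w) \<ge> 0"
      using excitation_along_integrable[OF w] excitation_along_nonneg by (intro integral_nonneg) auto
    then have "E \<le> 1" "0 \<le> E" using alpha_pos by (auto simp: E_def)
    then have "\<bar>E * (inner w0 w0 - 1)\<bar> \<le> \<bar>inner w0 w0 - 1\<bar>"
      by (simp add: abs_mult mult_left_le_one_le)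
    then show ?thesis
      using norm_square_decay[OF w t] by (simp add: B_def E_def power2_norm_eq_inner abs_le_iff)
  qed
  moreover have "B \<le> B\<^sup>2" "0 \<le> B"
    by (auto simp: B_def power2_eq_square mult_le_cancel_left1)
  ultimately have "norm (w t) \<le> B" if "t \<ge> t0" for t
    using that by (meson order_trans power2_le_imp_le)
  then show ?thesis unfolding bounded_iff by auto
qed

lemma excitation_integrand_eq:
  "(\<lambda>t. vout f (stim DT tau x t) (w t) theta * (inner (stim DT tau x t) (w t))\<^sup>2) = excitation_along w"
  by (simp add: fun_eq_iff excitation_along_def excitation_integrand_eq_pulses pulses_0_or_1)

lemma solution_tendsto_if_excitation_diverges:
  assumes w: "solves t0 w0 {t0..} w" and x: "x \<noteq> 0"
    and Q: "filterlim (\<lambda>t. integral {t0..t} (excitation_along w)) at_top at_top"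
  shows "((\<lambda>t. orth_part x (w t)) \<longlongrightarrow> 0) at_top"
    and "((\<lambda>t. (inner (w t) x)\<^sup>2) \<longlongrightarrow> inner x x) at_top"
proof -
  define Q where "Q t = integral {t0..t} (excitation_along w)" for t
  have ev: "\<forall>\<^sub>F t in at_top. t0 \<le> t" by (rule eventually_ge_at_top)
  have "((\<lambda>t. 1 + exp (- (2 * alpha * Q t)) * (inner w0 w0 - 1)) \<longlongrightarrow> 1 + 0 * (inner w0 w0 - 1)) at_top"
    using alpha_pos by (intro tendsto_intros exp_neg_tendsto_0[OF Q[folded Q_def]]) simp
  moreover have "\<forall>\<^sub>F t in at_top. 1 + exp (- (2 * alpha * Q t)) * (inner w0 w0 - 1) = inner (w t) (w t)"
    using ev
  proof eventually_elim
    case (elim t)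
    from norm_square_decay[OF w elim] show ?case unfolding Q_def by linarith
  qed
  ultimately have V: "((\<lambda>t. inner (w t) (w t)) \<longlongrightarrow> 1) at_top" by (simp add: tendsto_cong)
  have "((\<lambda>t. exp (- (alpha * Q t)) *\<^sub>R orth_part x w0) \<longlongrightarrow> 0 *\<^sub>R orth_part x w0) at_top"
    by (intro tendsto_intros exp_neg_tendsto_0[OF Q[folded Q_def] alpha_pos])
  moreover have "\<forall>\<^sub>F t in at_top. exp (- (alpha * Q t)) *\<^sub>R orth_part x w0 = orth_part x (w t)"
    using ev
  proof eventually_elim
    case (elim t)
    from orth_part_decay[OF w elim] show ?case unfolding Q_def by simp
  qed
  ultimately show P: "((\<lambda>t. orth_part x (w t)) \<longlongrightarrow> 0) at_top" by (simp add: tendsto_cong)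
  have "((\<lambda>t. inner (orth_part x (w t)) (orth_part x (w t))) \<longlongrightarrow> 0) at_top"
    using tendsto_inner[OF P P] by simp
  then have "((\<lambda>t. inner x x * (inner (w t) (w t) - inner (orth_part x (w t)) (orth_part x (w t))))
      \<longlongrightarrow> inner x x * (1 - 0)) at_top"
    by (rule tendsto_mult_left[OF tendsto_diff[OF V]])
  then show "((\<lambda>t. (inner (w t) x)\<^sup>2) \<longlongrightarrow> inner x x) at_top"
    by (simp add: inner_square_eq_orth_part[OF x])
qed

lemma solution_tendsto:
  assumes w: "solves t0 w0 {t0..} w" and theta: "theta \<ge> 0" and L: "L > 0" and \<delta>: "\<delta> > 0"
    and window: "\<And>t. t \<ge> t0 \<Longrightarrow> integral {t..t + L} (excitation_along w) > \<delta>"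
  shows "(w \<longlongrightarrow> x /\<^sub>R norm x) at_top"
proof -
  have x: "x \<noteq> 0"
  proof
    assume "x = 0"
    then have "excitation_along w = (\<lambda>_. 0)"
      unfolding excitation_along_def excitation_def by simp
    then show False using window[of t0] \<delta> by simp
  qed
  have "filterlim (\<lambda>t. integral {t0..t} (excitation_along w)) at_top at_top"
    by (rule integral_tendsto_at_top_if_windows[OF _ excitation_along_integrable[OF w] L \<delta> window])
      (rule excitation_along_nonneg)
  note P = solution_tendsto_if_excitation_diverges(1)[OF w x this]
    and y2 = solution_tendsto_if_excitation_diverges(2)[OF w x this]
  \<comment> \<open>the sign of \<open>\<langle>w, x\<rangle>\<close> is eventually constant, and the threshold \<open>theta \<ge> 0\<close> makes it positive\<close>
  have "\<forall>\<^sub>F t in at_top. (inner (w t) x)\<^sup>2 > inner x x / 4"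
    using x by (intro order_tendstoD(1)[OF y2]) simp
  then obtain T0 where T0: "\<And>t. t \<ge> T0 \<Longrightarrow> (inner (w t) x)\<^sup>2 > inner x x / 4"
    unfolding eventually_at_top_linorder by blast
  define T where "T = max T0 t0"
  have T: "T \<ge> t0" by (simp add: T_def)
  have y_nz: "inner (w t) x \<noteq> 0" if "t \<ge> T" for t
  proof
    assume "inner (w t) x = 0"
    with T0[of t] that have "inner x x < 0" by (simp add: T_def)
    then show False using inner_ge_zero[of x] by linarith
  qed
  obtain s where s: "s \<in> {T..T + L}" "excitation_along w s > 0"
  proof (rule ccontr)
    assume contra: "\<not> thesis"
    have "excitation_along w s \<le> 0" if "s \<in> {T..T + L}" for s
      using that contra \<open>\<And>s. s \<in> {T..T + L} \<Longrightarrow> excitation_along w s > 0 \<Longrightarrow> thesis\<close>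
      by (meson not_le)
    moreover have "excitation_along w integrable_on {T..T + L}"
      using integrable_on_subinterval[OF excitation_along_integrable[OF w, of "T + L"]] T by simp
    ultimately have "integral {T..T + L} (excitation_along w) \<le> integral {T..T + L} (\<lambda>_. 0::real)"
      by (intro integral_le) auto
    then show False using window[OF T(1)] \<delta> by simp
  qed
  then have "f (inner (w s) x - theta) \<noteq> 0" by (auto simp: excitation_along_def excitation_def)
  then have "inner (w s) x > 0" using f_nonpos[of "inner (w s) x - theta"] theta by linarith
  moreover have "continuous_on {T..} (\<lambda>t. inner (w t) x)"
    using solves_on_subset[OF w, of "{T..}"] T by (intro continuous_intros) (auto simp: solves_on_def)
  ultimately have ypos: "inner (w t) x > 0" if "t \<ge> T" for t
    using pos_if_nonzero_connected[of T "\<lambda>t. inner (w t) x" s t] y_nz s(1) that by auto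
  have "((\<lambda>t. sqrt ((inner (w t) x)\<^sup>2)) \<longlongrightarrow> sqrt (inner x x)) at_top"
    by (intro tendsto_intros y2)
  moreover have "\<forall>\<^sub>F t in at_top. sqrt ((inner (w t) x)\<^sup>2) = inner (w t) x"
    using eventually_ge_at_top[of T] by eventually_elim (use ypos in \<open>simp add: less_imp_le\<close>)
  ultimately have y: "((\<lambda>t. inner (w t) x) \<longlongrightarrow> norm x) at_top"
    by (simp add: tendsto_cong norm_eq_sqrt_inner)
  have "((\<lambda>t. orth_part x (w t) + (inner (w t) x / inner x x) *\<^sub>R x)
      \<longlongrightarrow> 0 + (norm x / inner x x) *\<^sub>R x) at_top"
    using x by (intro tendsto_intros P y) simp
  moreover have "norm x / inner x x = inverse (norm x)"
    using x by (simp add: power2_norm_eq_inner[symmetric] power2_eq_square inverse_eq_divide)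
  ultimately show ?thesis by (simp add: orth_part_def)
qed

end

theorem lemma1:
  fixes x w0 :: "real ^ 'n"
    and f :: "real \<Rightarrow> real"
    and tau :: "nat \<Rightarrow> real"
    and DT theta alpha t0 :: real
  assumes DT_pos: "DT > 0"
    and tau_sep: "\<And>j. tau (Suc j) > tau j + DT"
    and f_cont: "continuous_on UNIV f"
    and f_loclip: "\<And>u. \<exists>e>0. \<exists>K. K-lipschitz_on (cball u e) f"
    and f_nonpos: "\<And>u. u \<le> 0 \<Longrightarrow> f u = 0"
    and f_pos: "\<And>u. u > 0 \<Longrightarrow> f u > 0"
    and alpha_pos: "alpha > 0"
    and w0_nz: "w0 \<noteq> 0"
  shows
    "(\<exists>w. solves_on (rhs alpha f theta DT tau x) t0 w0 {t0..} w)
     \<and> (\<forall>w u T. solves_on (rhs alpha f theta DT tau x) t0 w0 {t0..} w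
           \<longrightarrow> solves_on (rhs alpha f theta DT tau x) t0 w0 {t0..T} u
           \<longrightarrow> (\<forall>t\<in>{t0..T}. u t = w t))
     \<and> (\<forall>w. solves_on (rhs alpha f theta DT tau x) t0 w0 {t0..} w \<longrightarrow>
           bounded (w ` {t0..})
           \<and> ((theta \<ge> 0 \<and>
               (\<exists>L>0. \<exists>\<delta>>0. \<forall>t\<ge>t0.
                  integral {t..t+L}
                    (\<lambda>\<tau>. vout f (stim DT tau x \<tau>) (w \<tau>) theta
                          * (inner (stim DT tau x \<tau>) (w \<tau>))\<^sup>2) > \<delta>))
              \<longrightarrow> (w \<longlongrightarrow> x /\<^sub>R norm x) at_top))"
proof -
  interpret pulsed_learning DT tau f alpha theta x
    using DT_pos tau_sep f_cont f_loclip f_nonpos f_pos alpha_pos by unfold_locales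
  show ?thesis
  proof (intro conjI allI impI ballI)
    obtain w where "solves t0 w0 {t0..} w" by (rule solution_exists)
    then show "\<exists>w. solves t0 w0 {t0..} w" by blast
  next
    fix w u T t
    assume w: "solves t0 w0 {t0..} w" and u: "solves t0 w0 {t0..T} u" and t: "t \<in> {t0..T}"
    have "solves t0 w0 {t0..T} w" using solves_on_subset[OF w] by auto
    from solution_unique[OF u this t] show "u t = w t" .
  next
    fix w assume "solves t0 w0 {t0..} w"
    then show "bounded (w ` {t0..})" by (rule solution_bounded)
  next
    fix w assume w: "solves t0 w0 {t0..} w"
      and "theta \<ge> 0 \<and> (\<exists>L>0. \<exists>\<delta>>0. \<forall>t\<ge>t0. integral {t..t+L}
        (\<lambda>\<tau>. vout f (stim DT tau x \<tau>) (w \<tau>) theta * (inner (stim DT tau x \<tau>) (w \<tau>))\<^sup>2) > \<delta>)"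
    then obtain L \<delta> where "theta \<ge> 0" "L > 0" "\<delta> > 0"
      and "\<forall>t\<ge>t0. integral {t..t + L} (excitation_along w) > \<delta>"
      unfolding excitation_integrand_eq by blast
    then show "(w \<longlongrightarrow> x /\<^sub>R norm x) at_top" using solution_tendsto[OF w, of L \<delta>] by blast
  qed
qed

end
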